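(* For any natural number $i$, there is a symmetric positive definite $m\times m$ matrix $G_i$ such that (i) $G_i^{-1}g_i=\theta\tau_i\widehat{S}^{-1}g_i$, where $g_i=B^{T}x_{i+1}-Dy_i-g$ and $\tau_i=\frac{\langle g_i,\widehat S^{-1}g_i\rangle}{\langle (B^TA_s^{-1}B+D)\widehat S^{-1}g_i,\widehat S^{-1}g_i\rangle}$ if $g_i\neq 0$, $\tau_i=1$ if $g_i=0$; (ii) all eigenvalues of the matrix $G_i^{-1}H$ lie in the interval $[\theta(1-\beta_1),\theta(1+\beta_1)]$.
   Context: Consider the generalized saddle point system $\begin{bmatrix} A & B\\ B^{T} & -D\end{bmatrix}\begin{bmatrix} x\\ y\end{bmatrix}=\begin{bmatrix} f\\ g\end{bmatrix}$, where $A$ is an $n\times n$ (possibly nonsymmetric) invertible matrix whose symmetric part $A_s=\frac12(A+A^T)$ is positive definite, $B$ is an $n\times m$ matrix with $m\le n$, and $D$ is symmetric positive semidefinite; the Schur complement $B^TA^{-1}B+D$ is assumed nonsingular. Let $H=B^TA_s^{-1}B+D$ (assumed symmetric positive definite), let $\widehat S$ be a symmetric positive definite preconditioner for $H$, let $\kappa_1=\mathrm{cond}(\widehat S^{-1}H)$ and $\beta_1=\frac{\kappa_1-1}{\kappa_1+1}$, and let $\theta>0$. The iterates $(x_i,y_i)$ are those of the preconditioned exact Uzawa method: given $x_0,y_0$, for $i=0,1,2,\dots$, $x_{i+1}=x_i+A^{-1}(f-(Ax_i+By_i))$, $y_{i+1}=y_i+\theta\tau_i\widehat S^{-1}(B^Tx_{i+1}-Dy_i-g)$,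 with $\tau_i$ as defined in the claim (this choice minimizes $\|\tau_i\widehat S^{-1}g_i-H^{-1}g_i\|_H^2$). *)

theory Defs
  imports "HOL-Analysis.Analysis"
begin

definition sym_part :: "real^'n^'n \<Rightarrow> real^'n^'n" where
  "sym_part A = (1/2) *\<^sub>R (A + transpose A)"

definition pos_def :: "real^'n^'n \<Rightarrow> bool" where
  "pos_def M \<longleftrightarrow> (\<forall>x. x \<noteq> 0 \<longrightarrow> 0 < x \<bullet> (M *v x))"

definition pos_semidef :: "real^'n^'n \<Rightarrow> bool" where
  "pos_semidef M \<longleftrightarrow> (\<forall>x. 0 \<le> x \<bullet> (M *v x))"

definition real_eigenvalue :: "real^'n^'n \<Rightarrow> real \<Rightarrow> bool" where
  "real_eigenvalue M l \<longleftrightarrow> (\<exists>v. v \<noteq> 0 \<and> M *v v = l *\<^sub>R v)"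

definition complex_eigenvalue :: "real^'n^'n \<Rightarrow> complex \<Rightarrow> bool" where
  "complex_eigenvalue M l \<longleftrightarrow>
     (\<exists>v :: complex^'n. v \<noteq> 0 \<and>
        (\<chi> i. \<Sum>j\<in>UNIV. complex_of_real (M $ i $ j) * v $ j) = (\<chi> i. l * v $ i))"

text \<open>Spectral condition number (ratio of largest to smallest eigenvalue), used
  for matrices with real positive spectrum such as inverse(S) H with S, H SPD.\<close>
definition spec_cond :: "real^'n^'n \<Rightarrow> real" where
  "spec_cond M = Max {l. real_eigenvalue M l} / Min {l. real_eigenvalue M l}"

definition Hmat :: "real^'n^'n \<Rightarrow> real^'m^'n \<Rightarrow> real^'m^'m \<Rightarrow> real^'m^'m" where
  "Hmat A B D = transpose B ** matrix_inv (sym_part A) ** B + D"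

definition tau :: "real^'m^'m \<Rightarrow> real^'m^'m \<Rightarrow> real^'m \<Rightarrow> real" where
  "tau H S gi = (if gi = 0 then 1 else
      (gi \<bullet> (matrix_inv S *v gi)) / ((H *v (matrix_inv S *v gi)) \<bullet> (matrix_inv S *v gi)))"

primrec uzawa :: "real^'n^'n \<Rightarrow> real^'m^'n \<Rightarrow> real^'m^'m \<Rightarrow> real^'m^'m \<Rightarrow> real
    \<Rightarrow> real^'n \<Rightarrow> real^'m \<Rightarrow> real^'n \<Rightarrow> real^'m \<Rightarrow> nat \<Rightarrow> (real^'n) \<times> (real^'m)" where
  "uzawa A B D S \<theta> f g x0 y0 0 = (x0, y0)"
| "uzawa A B D S \<theta> f g x0 y0 (Suc i) =
    (let x = fst (uzawa A B D S \<theta> f g x0 y0 i);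
         y = snd (uzawa A B D S \<theta> f g x0 y0 i);
         x' = x + matrix_inv A *v (f - (A *v x + B *v y));
         gi = transpose B *v x' - D *v y - g
     in (x', y + (\<theta> * tau (Hmat A B D) S gi) *\<^sub>R (matrix_inv S *v gi)))"

definition uzawa_res :: "real^'n^'n \<Rightarrow> real^'m^'n \<Rightarrow> real^'m^'m \<Rightarrow> real^'m^'m \<Rightarrow> real
    \<Rightarrow> real^'n \<Rightarrow> real^'m \<Rightarrow> real^'n \<Rightarrow> real^'m \<Rightarrow> nat \<Rightarrow> real^'m" where
  "uzawa_res A B D S \<theta> f g x0 y0 i =
     transpose B *v fst (uzawa A B D S \<theta> f g x0 y0 (Suc i)) - D *v snd (uzawa A B D S \<theta> f g x0 y0 i) - g"

end

theory Submission
  imports Defs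
begin

text \<open>
  Write \<open>\<parallel>x\<parallel>\<^sub>H\<close> for the energy norm of \<open>H\<close>. With \<open>e = H\<^sup>-\<^sup>1 g\<^sub>i\<close> and \<open>d = S\<^sup>-\<^sup>1 g\<^sub>i\<close>, the number
  \<open>\<tau>\<^sub>i\<close> makes \<open>\<tau>\<^sub>i d\<close> the \<open>H\<close>-orthogonal projection of \<open>e\<close> onto \<open>d\<close>. The extreme
  eigenvalues \<open>a \<le> b\<close> of \<open>S\<^sup>-\<^sup>1 H\<close> are the extreme values of the Rayleigh quotient of
  \<open>H S\<^sup>-\<^sup>1 H\<close> relative to \<open>H\<close>, and \<open>\<beta>\<^sub>1 = (b - a) / (b + a)\<close>; so by the Kantorovich inequality
  the remainder \<open>r = e - \<tau>\<^sub>i d\<close> satisfies \<open>\<parallel>r\<parallel>\<^sub>H \<le> \<beta>\<^sub>1 \<parallel>e\<parallel>\<^sub>H\<close>. A scaled \<open>H\<close>-reflection gives an \<open>H\<close>-self-adjoint \<open>N\<close> with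
  \<open>N e = r\<close> and \<open>H\<close>-norm at most \<open>\<beta>\<^sub>1\<close>. Then \<open>G\<^sup>-\<^sup>1 = \<theta> (I - N) H\<^sup>-\<^sup>1\<close> is symmetric positive
  definite, maps \<open>g\<^sub>i\<close> to \<open>\<theta> (e - r) = \<theta> \<tau>\<^sub>i d\<close>, and \<open>G\<^sup>-\<^sup>1 H = \<theta> (I - N)\<close> is
  \<open>H\<close>-self-adjoint, so its spectrum is real and lies in \<open>\<theta> [1 - \<beta>\<^sub>1, 1 + \<beta>\<^sub>1]\<close>.
\<close>

definition selfadjoint_wrt :: "real^'n^'n \<Rightarrow> real^'n^'n \<Rightarrow> bool" where
  "selfadjoint_wrt H M \<longleftrightarrow> (\<forall>x y. (M *v x) \<bullet> (H *v y) = (M *v y) \<bullet> (H *v x))"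

lemma matrix_inv_left_right:
  fixes X :: "real^'m^'m"
  assumes "invertible X"
  shows matrix_inv_right: "X ** matrix_inv X = mat 1"
    and matrix_inv_left: "matrix_inv X ** X = mat 1"
proof -
  have "\<exists>X'. X ** X' = mat 1 \<and> X' ** X = mat 1"
    using assms unfolding invertible_def by blast
  then have "X ** matrix_inv X = mat 1 \<and> matrix_inv X ** X = mat 1"
    unfolding matrix_inv_def by (rule someI_ex)
  then show "X ** matrix_inv X = mat 1" "matrix_inv X ** X = mat 1" by auto
qed

lemma matrix_vector_mul_inv_cancel:
  fixes X :: "real^'m^'m"
  assumes "invertible X"
  shows "X *v (matrix_inv X *v x) = x" "matrix_inv X *v (X *v x) = x"
  using matrix_inv_left_right[OF assms] by (simp_all add: matrix_vector_mul_assoc)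

lemma matrix_inv_unique:
  fixes X Y :: "real^'m^'m"
  assumes "X ** Y = mat 1"
  shows "matrix_inv X = Y"
proof -
  have "Y ** X = mat 1" using assms matrix_left_right_inverse by blast
  then have "invertible X" unfolding invertible_def using assms by blast
  have "matrix_inv X = matrix_inv X ** (X ** Y)" using assms by simp
  also have "\<dots> = (matrix_inv X ** X) ** Y" by (simp add: matrix_mul_assoc)
  also have "\<dots> = Y" using matrix_inv_left[OF \<open>invertible X\<close>] by simp
  finally show ?thesis .
qed

lemma matrix_inv_matrix_inv:
  fixes X :: "real^'m^'m"
  assumes "invertible X"
  shows "matrix_inv (matrix_inv X) = X"
  using matrix_inv_left[OF assms] matrix_inv_unique by blast

lemma symmetric_matrix_inv:
  fixes X :: "real^'m^'m"
  assumes "invertible X" "transpose X = X"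
  shows "transpose (matrix_inv X) = matrix_inv X"
proof -
  have "X ** transpose (matrix_inv X) = mat 1"
    by (metis assms(2) matrix_transpose_mul matrix_inv_left[OF assms(1)] transpose_mat)
  then show ?thesis using matrix_inv_unique by metis
qed

lemma inner_symmetric_matrix:
  fixes X :: "real^'m^'m"
  assumes "transpose X = X"
  shows "x \<bullet> (X *v y) = y \<bullet> (X *v x)"
  by (metis assms dot_lmul_matrix inner_commute transpose_matrix_vector)

lemma symmetric_if_inner_symmetric:
  fixes X :: "real^'m^'m"
  assumes "\<And>x y. x \<bullet> (X *v y) = y \<bullet> (X *v x)"
  shows "transpose X = X"
proof -
  have "transpose X *v y = X *v y" for y
  proof -
    have "x \<bullet> (transpose X *v y - X *v y) = 0" for x
    proof -
      have "x \<bullet> (transpose X *v y) = y \<bullet> (X *v x)"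
        by (metis dot_lmul_matrix inner_commute transpose_matrix_vector)
      then show ?thesis by (simp add: inner_diff_right assms)
    qed
    from this[of "transpose X *v y - X *v y"] show ?thesis by simp
  qed
  then show ?thesis by (simp add: matrix_eq)
qed

lemma pos_def_nonneg:
  assumes "pos_def H"
  shows "0 \<le> z \<bullet> (H *v z)"
  using assms unfolding pos_def_def
  by (metis inner_zero_left order_refl less_imp_le matrix_vector_mult_0_right)

lemma pos_def_eq_0:
  assumes "pos_def H" "z \<bullet> (H *v z) = 0"
  shows "z = 0"
  using assms unfolding pos_def_def by force

lemma pos_def_invertible:
  fixes X :: "real^'m^'m"
  assumes "pos_def X"
  shows "invertible X"
proof -
  have "\<forall>x. X *v x = 0 \<longrightarrow> x = 0"
    using pos_def_eq_0[OF assms] by auto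
  then have "\<exists>B. B ** X = mat 1" using matrix_left_invertible_ker by blast
  then show ?thesis using invertible_left_inverse by blast
qed

lemma pos_def_matrix_inv:
  fixes X :: "real^'m^'m"
  assumes "pos_def X" "transpose X = X"
  shows "pos_def (matrix_inv X)"
  unfolding pos_def_def
proof (intro allI impI)
  fix z :: "real^'m" assume "z \<noteq> 0"
  have inv: "invertible X" using pos_def_invertible assms by blast
  define y where "y = matrix_inv X *v z"
  have zy: "z = X *v y" unfolding y_def using matrix_vector_mul_inv_cancel[OF inv] by simp
  with \<open>z \<noteq> 0\<close> have "y \<noteq> 0" by auto
  then have "0 < y \<bullet> (X *v y)" using assms(1) unfolding pos_def_def by blast
  then show "0 < z \<bullet> (matrix_inv X *v z)"
    unfolding y_def[symmetric] zy by (simp add: inner_commute matrix_vector_mul_inv_cancel[OF inv])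
qed

lemma quadratic_nonneg_discriminant:
  fixes A B C :: real
  assumes nonneg: "\<And>t. 0 \<le> A + 2*t*B + t^2*C" and "0 \<le> C"
  shows "B^2 \<le> A*C"
proof (cases "C = 0")
  case True
  have "B = 0"
  proof (rule ccontr)
    assume "B \<noteq> 0"
    have "0 \<le> A + 2*(-(A+1)/(2*B))*B + (-(A+1)/(2*B))^2*C" by (rule nonneg)
    also have "\<dots> = -1" using True \<open>B \<noteq> 0\<close> by (simp add: field_simps)
    finally show False by simp
  qed
  then show ?thesis using True by simp
next
  case False
  with \<open>0 \<le> C\<close> have "0 < C" by simp
  have "0 \<le> A + 2*(-B/C)*B + (-B/C)^2*C" by (rule nonneg)
  also have "\<dots> = A - B^2/C" using \<open>0 < C\<close> by (simp add: field_simps power2_eq_square)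
  finally show ?thesis using \<open>0 < C\<close> by (simp add: field_simps)
qed

lemma quadratic_form_expand:
  fixes Q :: "real^'m^'m"
  shows "(x + t *\<^sub>R y) \<bullet> (Q *v (x + t *\<^sub>R y)) =
    x \<bullet> (Q *v x) + t * (x \<bullet> (Q *v y) + y \<bullet> (Q *v x)) + t^2 * (y \<bullet> (Q *v y))"
  by (simp add: matrix_vector_right_distrib matrix_vector_mult_scaleR inner_add_left inner_add_right
      algebra_simps power2_eq_square)

lemma psd_Cauchy_Schwarz:
  fixes Q :: "real^'m^'m"
  assumes "transpose Q = Q" and psd: "\<And>z. 0 \<le> z \<bullet> (Q *v z)"
  shows "(x \<bullet> (Q *v y))^2 \<le> (x \<bullet> (Q *v x)) * (y \<bullet> (Q *v y))"
proof (rule quadratic_nonneg_discriminant)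
  fix t
  have "0 \<le> (x + t *\<^sub>R y) \<bullet> (Q *v (x + t *\<^sub>R y))" by (rule psd)
  also have "\<dots> = x \<bullet> (Q *v x) + 2 * t * (x \<bullet> (Q *v y)) + t^2 * (y \<bullet> (Q *v y))"
    unfolding quadratic_form_expand using inner_symmetric_matrix[OF assms(1), of y x] by simp
  finally show "0 \<le> x \<bullet> (Q *v x) + 2 * t * (x \<bullet> (Q *v y)) + t^2 * (y \<bullet> (Q *v y))" .
qed (rule psd)

lemma continuous_on_quadratic_form:
  fixes P :: "real^'m^'m"
  shows "continuous_on S (\<lambda>y. y \<bullet> (P *v y))"
proof -
  have "continuous_on S (\<lambda>y. P *v y)"
    by (simp add: linear_continuous_on linear_conv_bounded_linear[symmetric])
  then show ?thesis by (intro continuous_intros)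
qed

lemma generalized_Rayleigh_max:
  fixes H P :: "real^'m^'m"
  assumes Hs: "transpose H = H" and Hp: "pos_def H" and Ps: "transpose P = P"
  obtains l x where "x \<noteq> 0" "P *v x = l *\<^sub>R (H *v x)" "\<And>y. y \<bullet> (P *v y) \<le> l * (y \<bullet> (H *v y))"
proof -
  define F where "F y = (y \<bullet> (P *v y)) / (y \<bullet> (H *v y))" for y :: "real^'m"
  have "sphere (0::real^'m) 1 \<noteq> {}"
    using vector_choose_size[of 1] by auto
  moreover have "continuous_on (sphere 0 1) F"
    unfolding F_def
  proof (intro continuous_on_divide continuous_on_quadratic_form ballI)
    fix y :: "real^'m" assume "y \<in> sphere 0 1"
    then show "y \<bullet> (H *v y) \<noteq> 0" using pos_def_eq_0[OF Hp] by force
  qed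
  ultimately obtain x where x: "x \<in> sphere 0 1" and max: "\<forall>y\<in>sphere 0 1. F y \<le> F x"
    using continuous_attains_sup[OF compact_sphere] by blast
  define l where "l = F x"
  have "x \<noteq> 0" using x by auto
  have bound: "y \<bullet> (P *v y) \<le> l * (y \<bullet> (H *v y))" for y
  proof (cases "y = 0")
    case False
    define c where "c = 1 / norm y"
    have "c \<noteq> 0" "c *\<^sub>R y \<in> sphere 0 1" using False unfolding c_def by simp_all
    then have "F y = F (c *\<^sub>R y)"
      unfolding F_def by (simp add: matrix_vector_mult_scaleR power2_eq_square)
    also have "\<dots> \<le> l" using max \<open>c *\<^sub>R y \<in> sphere 0 1\<close> unfolding l_def by blast
    finally have "F y \<le> l" .
    moreover have "0 < y \<bullet> (H *v y)" using Hp False unfolding pos_def_def by blast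
    ultimately show ?thesis unfolding F_def by (simp add: divide_le_eq)
  qed simp
  text \<open>\<open>Q = l H - P\<close> is positive semidefinite with \<open>x\<^sup>T Q x = 0\<close>, so Cauchy-Schwarz forces \<open>Q x = 0\<close>.\<close>
  define Q where "Q = l *\<^sub>R H - P"
  have Qv: "Q *v z = l *\<^sub>R (H *v z) - P *v z" for z
    unfolding Q_def by (simp add: matrix_vector_mult_diff_rdistrib scaleR_matrix_vector_assoc)
  have Qs: "transpose Q = Q" unfolding Q_def using Hs Ps by (simp add: transpose_def vec_eq_iff)
  have Qpsd: "0 \<le> z \<bullet> (Q *v z)" for z
    using bound[of z] unfolding Qv by (simp add: inner_diff_right)
  have "0 < x \<bullet> (H *v x)" using Hp \<open>x \<noteq> 0\<close> unfolding pos_def_def by blast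
  then have "x \<bullet> (Q *v x) = 0" unfolding Qv l_def F_def by (simp add: inner_diff_right)
  with psd_Cauchy_Schwarz[OF Qs Qpsd, of "Q *v x" x] have "Q *v x = 0" by simp
  then have "P *v x = l *\<^sub>R (H *v x)" unfolding Qv by simp
  with \<open>x \<noteq> 0\<close> bound show ?thesis using that by blast
qed

lemma generalized_Rayleigh_min:
  fixes H P :: "real^'m^'m"
  assumes Hs: "transpose H = H" and Hp: "pos_def H" and Ps: "transpose P = P"
  obtains l x where "x \<noteq> 0" "P *v x = l *\<^sub>R (H *v x)" "\<And>y. l * (y \<bullet> (H *v y)) \<le> y \<bullet> (P *v y)"
proof -
  have mP: "(-P) *v y = - (P *v y)" for y by (simp add: matrix_vector_mult_def vec_eq_iff sum_negf)
  have "transpose (-P) = -P" using Ps by (simp add: transpose_def vec_eq_iff)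
  then obtain l x where "x \<noteq> 0" "(-P) *v x = l *\<^sub>R (H *v x)"
    and max: "\<And>y. y \<bullet> ((-P) *v y) \<le> l * (y \<bullet> (H *v y))"
    using generalized_Rayleigh_max[OF Hs Hp] by blast
  show ?thesis
  proof (rule that[of x "-l"])
    show "P *v x = (-l) *\<^sub>R (H *v x)"
      using \<open>(-P) *v x = l *\<^sub>R (H *v x)\<close> unfolding mP by (metis minus_minus scaleR_minus_left)
    show "-l * (y \<bullet> (H *v y)) \<le> y \<bullet> (P *v y)" for y
      using max[of y] unfolding mP by simp
  qed fact
qed

lemma H_orthogonal_independent:
  fixes H :: "real^'m^'m"
  assumes Hp: "pos_def H" and orth: "\<And>v w. v \<in> T \<Longrightarrow> w \<in> T \<Longrightarrow> v \<noteq> w \<Longrightarrow> v \<bullet> (H *v w) = 0"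
    and "0 \<notin> T"
  shows "independent T"
  unfolding real_vector.independent_explicit_finite_subsets
proof (intro allI impI ballI)
  fix U u w assume U: "U \<subseteq> T" "finite U" and sum: "(\<Sum>v\<in>U. u v *\<^sub>R v) = 0" and "w \<in> U"
  have "w \<noteq> 0" using U \<open>w \<in> U\<close> \<open>0 \<notin> T\<close> by auto
  then have "0 < w \<bullet> (H *v w)" using Hp unfolding pos_def_def by blast
  have "0 = (\<Sum>v\<in>U. u v *\<^sub>R v) \<bullet> (H *v w)" using sum by simp
  also have "\<dots> = (\<Sum>v\<in>U. u v * (v \<bullet> (H *v w)))" by (simp add: inner_sum_left)
  also have "\<dots> = (\<Sum>v\<in>U. if v = w then u w * (w \<bullet> (H *v w)) else 0)"
    using U \<open>w \<in> U\<close> orth by (intro sum.cong) auto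
  also have "\<dots> = u w * (w \<bullet> (H *v w))" using U \<open>w \<in> U\<close> by simp
  finally show "u w = 0" using \<open>0 < w \<bullet> (H *v w)\<close> by simp
qed

lemma finite_real_eigenvalues_selfadjoint:
  fixes H M :: "real^'m^'m"
  assumes Hs: "transpose H = H" and Hp: "pos_def H" and M: "selfadjoint_wrt H M"
  shows "finite {l. real_eigenvalue M l}"
proof -
  define E where "E = {l. real_eigenvalue M l}"
  define v where "v l = (SOME v. v \<noteq> 0 \<and> M *v v = l *\<^sub>R v)" for l
  have v: "v l \<noteq> 0 \<and> M *v v l = l *\<^sub>R v l" if "l \<in> E" for l
  proof -
    have "\<exists>v. v \<noteq> 0 \<and> M *v v = l *\<^sub>R v" using that unfolding E_def real_eigenvalue_def by blast
    then show ?thesis unfolding v_def by (rule someI_ex)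
  qed
  have orth: "v l1 \<bullet> (H *v v l2) = 0" if "l1 \<in> E" "l2 \<in> E" "l1 \<noteq> l2" for l1 l2
  proof -
    have "(M *v v l2) \<bullet> (H *v v l1) = (M *v v l1) \<bullet> (H *v v l2)"
      using M unfolding selfadjoint_wrt_def by metis
    then have "l2 * (v l1 \<bullet> (H *v v l2)) = l1 * (v l1 \<bullet> (H *v v l2))"
      using v[OF that(1)] v[OF that(2)] inner_symmetric_matrix[OF Hs, of "v l2" "v l1"] by simp
    then show ?thesis using that(3) by simp
  qed
  have inj: "inj_on v E"
  proof (rule inj_onI, rule ccontr)
    fix l1 l2 assume "l1 \<in> E" "l2 \<in> E" "v l1 = v l2" "l1 \<noteq> l2"
    then have "v l1 \<bullet> (H *v v l1) = 0" using orth by metis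
    then show False using v \<open>l1 \<in> E\<close> pos_def_eq_0[OF Hp] by blast
  qed
  have "independent (v ` E)"
    using H_orthogonal_independent[OF Hp, of "v ` E"] orth v by fastforce
  then have "finite (v ` E)" using independent_bound by auto
  then show ?thesis using finite_image_iff[OF inj] unfolding E_def by simp
qed

lemma complex_eigenvalue_selfadjoint_real:
  fixes M H :: "real^'m^'m"
  assumes Hs: "transpose H = H" and Hp: "pos_def H" and M: "selfadjoint_wrt H M"
    and "complex_eigenvalue M mu"
  obtains p u where "mu = complex_of_real p" "u \<noteq> 0" "M *v u = p *\<^sub>R u"
proof -
  obtain v :: "complex^'m" where "v \<noteq> 0"
    and vv: "(\<chi> i. \<Sum>j\<in>UNIV. complex_of_real (M $ i $ j) * v $ j) = (\<chi> i. mu * v $ i)"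
    using assms(4) unfolding complex_eigenvalue_def by blast
  have eq: "(\<Sum>j\<in>UNIV. complex_of_real (M $ i $ j) * v $ j) = mu * v $ i" for i
    using vv by (simp add: vec_eq_iff)
  define u where "u = (\<chi> i. Re (v $ i))"
  define w where "w = (\<chi> i. Im (v $ i))"
  define p where "p = Re mu"
  define q where "q = Im mu"
  have Mu: "M *v u = p *\<^sub>R u - q *\<^sub>R w"
  proof -
    have "(M *v u) $ i = Re (mu * v $ i)" for i
      unfolding u_def eq[symmetric] by (simp add: matrix_vector_mult_def Re_sum)
    then show ?thesis unfolding u_def w_def p_def q_def by (simp add: vec_eq_iff)
  qed
  have Mw: "M *v w = q *\<^sub>R u + p *\<^sub>R w"
  proof -
    have "(M *v w) $ i = Im (mu * v $ i)" for i
      unfolding w_def eq[symmetric] by (simp add: matrix_vector_mult_def Im_sum)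
    then show ?thesis unfolding u_def w_def p_def q_def by (simp add: vec_eq_iff algebra_simps)
  qed
  text \<open>\<open>H\<close>-self-adjointness on the real and imaginary parts of \<open>v\<close> forces \<open>Im mu = 0\<close>.\<close>
  have "(M *v u) \<bullet> (H *v w) = (M *v w) \<bullet> (H *v u)"
    using M unfolding selfadjoint_wrt_def by blast
  then have qz: "q * (u \<bullet> (H *v u) + w \<bullet> (H *v w)) = 0"
    unfolding Mu Mw using inner_symmetric_matrix[OF Hs, of u w]
    by (simp add: inner_diff_left inner_add_left algebra_simps)
  have "u \<noteq> 0 \<or> w \<noteq> 0"
    using \<open>v \<noteq> 0\<close> unfolding u_def w_def by (auto simp: vec_eq_iff complex_eq_iff)
  then have "0 < u \<bullet> (H *v u) + w \<bullet> (H *v w)"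
    using pos_def_nonneg[OF Hp, of u] pos_def_nonneg[OF Hp, of w] Hp unfolding pos_def_def
    by (meson add_pos_nonneg add_nonneg_pos)
  then have "q = 0" using qz by simp
  then have "mu = complex_of_real p" unfolding p_def q_def by (simp add: complex_eq_iff)
  then show ?thesis using that Mu Mw \<open>q = 0\<close> \<open>u \<noteq> 0 \<or> w \<noteq> 0\<close> by (cases "u = 0") auto
qed

lemma selfadjoint_wrt_symmetric_mult:
  fixes H S :: "real^'m^'m"
  assumes "transpose S = S"
  shows "selfadjoint_wrt H (S ** H)"
  unfolding selfadjoint_wrt_def
proof (intro allI)
  fix x y
  have "(S *v (H *v x)) \<bullet> (H *v y) = (S *v (H *v y)) \<bullet> (H *v x)"
    using inner_symmetric_matrix[OF assms, of "H *v y" "H *v x"] by (simp add: inner_commute)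
  then show "((S ** H) *v x) \<bullet> (H *v y) = ((S ** H) *v y) \<bullet> (H *v x)"
    by (simp add: matrix_vector_mul_assoc[symmetric])
qed

lemma preconditioned_eigenvector_iff:
  fixes H S :: "real^'m^'m"
  assumes "invertible H"
  shows "(S ** H) *v x = l *\<^sub>R x \<longleftrightarrow> (H ** S ** H) *v x = l *\<^sub>R (H *v x)"
proof
  assume "(H ** S ** H) *v x = l *\<^sub>R (H *v x)"
  then have "H *v ((S ** H) *v x) = H *v (l *\<^sub>R x)"
    by (simp add: matrix_vector_mul_assoc matrix_mul_assoc matrix_vector_mult_scaleR)
  then show "(S ** H) *v x = l *\<^sub>R x"
    by (metis matrix_vector_mul_inv_cancel(2)[OF assms])
qed (simp add: matrix_vector_mul_assoc[symmetric] matrix_mul_assoc[symmetric] matrix_vector_mult_scaleR)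

lemma preconditioned_spectrum:
  fixes H S :: "real^'m^'m"
  assumes Hs: "transpose H = H" and Hp: "pos_def H" and Ss: "transpose S = S" and Sp: "pos_def S"
  obtains a b where "0 < a" "a \<le> b" "spec_cond (matrix_inv S ** H) = b / a"
    "\<And>y. a * (y \<bullet> (H *v y)) \<le> y \<bullet> ((H ** matrix_inv S ** H) *v y)"
    "\<And>y. y \<bullet> ((H ** matrix_inv S ** H) *v y) \<le> b * (y \<bullet> (H *v y))"
proof -
  define Si where "Si = matrix_inv S"
  define P where "P = H ** Si ** H"
  define E where "E = {l. real_eigenvalue (Si ** H) l}"
  have Sis: "transpose Si = Si"
    unfolding Si_def using symmetric_matrix_inv[OF pos_def_invertible[OF Sp] Ss] .
  have Hinv: "invertible H" using pos_def_invertible[OF Hp] .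
  have Ps: "transpose P = P" unfolding P_def by (simp add: matrix_transpose_mul Hs Sis matrix_mul_assoc)
  have E_iff: "l \<in> E \<longleftrightarrow> (\<exists>x. x \<noteq> 0 \<and> P *v x = l *\<^sub>R (H *v x))" for l
    unfolding E_def P_def real_eigenvalue_def preconditioned_eigenvector_iff[OF Hinv] by simp
  have "finite E"
    unfolding E_def by (rule finite_real_eigenvalues_selfadjoint[OF Hs Hp selfadjoint_wrt_symmetric_mult[OF Sis]])
  obtain b xb where "xb \<noteq> 0" "P *v xb = b *\<^sub>R (H *v xb)" and upper: "\<And>y. y \<bullet> (P *v y) \<le> b * (y \<bullet> (H *v y))"
    using generalized_Rayleigh_max[OF Hs Hp Ps] by blast
  then have "b \<in> E" unfolding E_iff by blast
  obtain a xa where xa: "xa \<noteq> 0" "P *v xa = a *\<^sub>R (H *v xa)" and lower: "\<And>y. a * (y \<bullet> (H *v y)) \<le> y \<bullet> (P *v y)"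
    using generalized_Rayleigh_min[OF Hs Hp Ps] by blast
  have "a \<in> E" unfolding E_iff using xa by blast
  have between: "a \<le> l \<and> l \<le> b" if l: "l \<in> E" for l
  proof -
    obtain x where "x \<noteq> 0" "P *v x = l *\<^sub>R (H *v x)" using l unfolding E_iff by blast
    then have "0 < x \<bullet> (H *v x)" "x \<bullet> (P *v x) = l * (x \<bullet> (H *v x))"
      using Hp unfolding pos_def_def by simp_all
    then show ?thesis using upper[of x] lower[of x] mult_le_cancel_right_pos by metis
  qed
  have "H *v xa \<noteq> 0" using xa(1) matrix_vector_mul_inv_cancel(2)[OF Hinv, of xa] by auto
  then have "0 < (H *v xa) \<bullet> (Si *v (H *v xa))"
    using pos_def_matrix_inv[OF Sp Ss] unfolding Si_def pos_def_def by blast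
  also have "\<dots> = a * (xa \<bullet> (H *v xa))"
    using xa(2) inner_symmetric_matrix[OF Hs, of xa "Si *v (H *v xa)"] unfolding P_def
    by (simp add: matrix_vector_mul_assoc[symmetric] matrix_mul_assoc[symmetric] inner_commute)
  finally have "0 < a"
    using pos_def_nonneg[OF Hp, of xa] by (simp add: zero_less_mult_iff)
  have "Max E = b" using \<open>finite E\<close> \<open>b \<in> E\<close> between by (intro Max_eqI) auto
  moreover have "Min E = a" using \<open>finite E\<close> \<open>a \<in> E\<close> between by (intro Min_eqI) auto
  ultimately have "spec_cond (matrix_inv S ** H) = b / a"
    unfolding spec_cond_def E_def Si_def by simp
  with \<open>0 < a\<close> between[OF \<open>a \<in> E\<close>] upper lower show ?thesis
    using that[of a b] unfolding Si_def P_def by blast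
qed

lemma Kantorovich_quotient_bound:
  fixes a b n c d :: real
  assumes "0 < a" "a \<le> b" "0 < n" "0 < d" "d \<le> (a+b)*c - a*b*n"
  shows "n - c^2/d \<le> ((b-a)/(b+a))^2 * n"
proof -
  have "0 < a + b" using assms by simp
  have "4*a*b*n*d \<le> 4*a*b*n*((a+b)*c - a*b*n)"
    using assms by (intro mult_left_mono) auto
  also have "\<dots> \<le> (a+b)^2*c^2"
    using zero_le_power2[of "(a+b)*c - 2*a*b*n"] by (simp add: power2_eq_square algebra_simps)
  finally have key: "4*a*b*n*d \<le> (a+b)^2*c^2" .
  have "(n - c^2/d) * ((a+b)^2 * d) = (a+b)^2*n*d - (a+b)^2*c^2"
    using assms by (simp add: field_simps)
  also have "\<dots> \<le> (b-a)^2 * n * d"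
    using key by (simp add: power2_eq_square algebra_simps)
  also have "\<dots> = ((b-a)/(b+a))^2 * n * ((a+b)^2 * d)"
    using \<open>0 < a + b\<close> by (simp add: power_divide field_simps)
  finally show ?thesis using \<open>0 < a + b\<close> \<open>0 < d\<close> by (simp add: mult_le_cancel_right_pos)
qed

lemma steepest_descent_denominator_bound:
  fixes H P :: "real^'m^'m" and e f :: "real^'m" and a b :: real
  assumes Hs: "transpose H = H" and Hp: "pos_def H" and Ps: "transpose P = P" and "a \<le> b"
    and lower: "\<And>y. a * (y \<bullet> (H *v y)) \<le> y \<bullet> (P *v y)"
    and upper: "\<And>y. y \<bullet> (P *v y) \<le> b * (y \<bullet> (H *v y))"
    and Pe: "P *v e = H *v f"
  shows "f \<bullet> (H *v f) \<le> (a+b) * (e \<bullet> (H *v f)) - a*b * (e \<bullet> (H *v e))"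
proof -
  define n where "n = e \<bullet> (H *v e)"
  define c where "c = e \<bullet> (H *v f)"
  define d where "d = f \<bullet> (H *v f)"
  text \<open>Cauchy-Schwarz for the semidefinite form \<open>P - a H\<close>, applied to \<open>e\<close> and \<open>f - a e\<close>.\<close>
  define f' where "f' = f - a *\<^sub>R e"
  define Q where "Q = P - a *\<^sub>R H"
  define D where "D = f' \<bullet> (H *v f')"
  have Qv: "Q *v z = P *v z - a *\<^sub>R (H *v z)" for z
    unfolding Q_def by (simp add: matrix_vector_mult_diff_rdistrib scaleR_matrix_vector_assoc)
  have Qs: "transpose Q = Q" unfolding Q_def using Hs Ps by (simp add: transpose_def vec_eq_iff)
  have Qpsd: "0 \<le> z \<bullet> (Q *v z)" for z using lower[of z] unfolding Qv by (simp add: inner_diff_right)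
  have ce: "c = e \<bullet> (P *v e)" unfolding c_def Pe ..
  have fHe: "f \<bullet> (H *v e) = c" unfolding c_def using inner_symmetric_matrix[OF Hs] by metis
  have ePf: "e \<bullet> (P *v f) = d" unfolding d_def using inner_symmetric_matrix[OF Ps, of e f] Pe by simp
  have D_eq: "D = d - 2*a*c + a^2*n" unfolding D_def f'_def n_def d_def
    using fHe c_def by (simp add: inner_diff_left inner_diff_right matrix_vector_mult_diff_distrib
      matrix_vector_mult_scaleR algebra_simps power2_eq_square)
  have "0 \<le> D" unfolding D_def by (rule pos_def_nonneg[OF Hp])
  have eQf': "e \<bullet> (Q *v f') = D" unfolding Qv D_eq f'_def
    using ePf ce c_def n_def by (simp add: inner_diff_right matrix_vector_mult_diff_distrib
      matrix_vector_mult_scaleR algebra_simps power2_eq_square)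
  have eQe: "e \<bullet> (Q *v e) = c - a*n" unfolding Qv using ce n_def by (simp add: inner_diff_right)
  have f'Qf': "f' \<bullet> (Q *v f') \<le> (b - a) * D" unfolding Qv D_def using upper[of f']
    by (simp add: inner_diff_right algebra_simps)
  have "D^2 \<le> (c - a*n) * (f' \<bullet> (Q *v f'))"
    using psd_Cauchy_Schwarz[OF Qs Qpsd, of e f'] eQf' eQe by simp
  also have "\<dots> \<le> (c - a*n) * ((b - a) * D)"
    using f'Qf' Qpsd[of e] eQe by (intro mult_left_mono) auto
  finally have "D * D \<le> D * ((c - a*n) * (b - a))" by (simp add: power2_eq_square algebra_simps)
  then have "D \<le> (c - a*n) * (b - a)"
    using \<open>0 \<le> D\<close> Qpsd[of e] eQe \<open>a \<le> b\<close>
    by (cases "D = 0") (simp_all add: mult_le_cancel_left)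
  then show ?thesis unfolding D_eq n_def c_def d_def by (simp add: algebra_simps power2_eq_square)
qed

lemma steepest_descent_error_bound:
  fixes H P :: "real^'m^'m" and e f :: "real^'m" and a b :: real
  assumes Hs: "transpose H = H" and Hp: "pos_def H" and Ps: "transpose P = P"
    and "0 < a" "a \<le> b"
    and lower: "\<And>y. a * (y \<bullet> (H *v y)) \<le> y \<bullet> (P *v y)"
    and upper: "\<And>y. y \<bullet> (P *v y) \<le> b * (y \<bullet> (H *v y))"
    and Pe: "P *v e = H *v f" and "e \<noteq> 0"
  defines "t \<equiv> (e \<bullet> (H *v f)) / (f \<bullet> (H *v f))"
  shows "(e - t *\<^sub>R f) \<bullet> (H *v (e - t *\<^sub>R f)) \<le> ((b-a)/(b+a))^2 * (e \<bullet> (H *v e))"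
proof -
  define n where "n = e \<bullet> (H *v e)"
  define c where "c = e \<bullet> (H *v f)"
  define d where "d = f \<bullet> (H *v f)"
  have "0 < n" using Hp \<open>e \<noteq> 0\<close> unfolding pos_def_def n_def by blast
  have "c = e \<bullet> (P *v e)" unfolding c_def Pe ..
  then have "0 < c" using lower[of e] \<open>0 < n\<close> \<open>0 < a\<close> unfolding n_def
    by (smt (verit) mult_pos_pos)
  then have "f \<noteq> 0" unfolding c_def by auto
  then have "0 < d" using Hp unfolding pos_def_def d_def by blast
  have "(e - t *\<^sub>R f) \<bullet> (H *v (e - t *\<^sub>R f)) = n - 2*t*c + t^2*d"
    unfolding n_def d_def c_def using inner_symmetric_matrix[OF Hs, of f e]
    by (simp add: inner_diff_left inner_diff_right matrix_vector_mult_diff_distrib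
      matrix_vector_mult_scaleR algebra_simps power2_eq_square)
  also have "\<dots> = n - c^2/d" unfolding t_def c_def[symmetric] d_def[symmetric]
    using \<open>0 < d\<close> by (simp add: field_simps power2_eq_square)
  also have "\<dots> \<le> ((b-a)/(b+a))^2 * n"
    using Kantorovich_quotient_bound[OF \<open>0 < a\<close> \<open>a \<le> b\<close> \<open>0 < n\<close> \<open>0 < d\<close>]
      steepest_descent_denominator_bound[OF Hs Hp Ps \<open>a \<le> b\<close> lower upper Pe]
    unfolding n_def c_def d_def by blast
  finally show ?thesis unfolding n_def .
qed

lemma preconditioned_steepest_descent_error:
  fixes H S :: "real^'m^'m" and g :: "real^'m"
  assumes Hs: "transpose H = H" and Hp: "pos_def H" and Ss: "transpose S = S" and Sp: "pos_def S"
  defines "\<beta> \<equiv> (spec_cond (matrix_inv S ** H) - 1) / (spec_cond (matrix_inv S ** H) + 1)"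
    and "e \<equiv> matrix_inv H *v g" and "r \<equiv> matrix_inv H *v g - tau H S g *\<^sub>R (matrix_inv S *v g)"
  shows "0 \<le> \<beta>" "\<beta> < 1" "r \<bullet> (H *v r) \<le> \<beta>^2 * (e \<bullet> (H *v e))"
proof -
  obtain a b where "0 < a" "a \<le> b" and \<kappa>: "spec_cond (matrix_inv S ** H) = b / a"
    and lower: "\<And>y. a * (y \<bullet> (H *v y)) \<le> y \<bullet> ((H ** matrix_inv S ** H) *v y)"
    and upper: "\<And>y. y \<bullet> ((H ** matrix_inv S ** H) *v y) \<le> b * (y \<bullet> (H *v y))"
    using preconditioned_spectrum[OF Hs Hp Ss Sp] by blast
  have \<beta>: "\<beta> = (b - a) / (b + a)"
  proof -
    have "b/a - 1 = (b-a)/a" "b/a + 1 = (b+a)/a" using \<open>0 < a\<close> by (simp_all add: field_simps)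
    then show ?thesis unfolding \<beta>_def \<kappa> using \<open>0 < a\<close> by simp
  qed
  show "0 \<le> \<beta>" "\<beta> < 1" unfolding \<beta> using \<open>0 < a\<close> \<open>a \<le> b\<close> by (simp_all add: field_simps)
  define f where "f = matrix_inv S *v g"
  have He: "H *v e = g"
    unfolding e_def using matrix_vector_mul_inv_cancel(1)[OF pos_def_invertible[OF Hp]] .
  show "r \<bullet> (H *v r) \<le> \<beta>^2 * (e \<bullet> (H *v e))"
  proof (cases "g = 0")
    case True
    then show ?thesis unfolding r_def e_def by simp
  next
    case False
    then have "e \<noteq> 0" using He by auto
    have Pe: "(H ** matrix_inv S ** H) *v e = H *v f"
      unfolding f_def He[symmetric] by (simp add: matrix_vector_mul_assoc matrix_mul_assoc)
    have "tau H S g = (e \<bullet> (H *v f)) / (f \<bullet> (H *v f))"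
      using False inner_symmetric_matrix[OF Hs, of e f]
      unfolding tau_def f_def He[symmetric] by (simp add: inner_commute)
    then show ?thesis
      using steepest_descent_error_bound[OF Hs Hp _ \<open>0 < a\<close> \<open>a \<le> b\<close> lower upper Pe \<open>e \<noteq> 0\<close>]
        symmetric_matrix_inv[OF pos_def_invertible[OF Sp] Ss]
      unfolding r_def e_def[symmetric] \<beta> f_def by (simp add: matrix_transpose_mul Hs matrix_mul_assoc)
  qed
qed

definition H_reflection :: "real^'n^'n \<Rightarrow> real^'n \<Rightarrow> real^'n \<Rightarrow> real^'n" where
  "H_reflection H w x = x - (2 * (w \<bullet> (H *v x)) / (w \<bullet> (H *v w))) *\<^sub>R w"

lemma linear_H_reflection: "linear (H_reflection H w)"
  by (rule linearI) (simp_all add: H_reflection_def matrix_vector_right_distrib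
      matrix_vector_mult_scaleR inner_add_right add_divide_distrib algebra_simps)

lemma H_reflection_selfadjoint:
  assumes "transpose H = H"
  shows "H_reflection H w x \<bullet> (H *v y) = H_reflection H w y \<bullet> (H *v x)"
  unfolding H_reflection_def
  using inner_symmetric_matrix[OF assms, of x y] inner_symmetric_matrix[OF assms, of w x]
    inner_symmetric_matrix[OF assms, of w y]
  by (simp add: inner_diff_left algebra_simps)

lemma H_reflection_isometry:
  assumes "transpose H = H"
  shows "H_reflection H w x \<bullet> (H *v H_reflection H w x) = x \<bullet> (H *v x)"
proof -
  define q where "q = w \<bullet> (H *v x)"
  define W where "W = w \<bullet> (H *v w)"
  have "H_reflection H w x \<bullet> (H *v H_reflection H w x) = x \<bullet> (H *v x) - 4 * q^2 / W + 4 * q^2 / W^2 * W"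
    unfolding H_reflection_def q_def W_def using inner_symmetric_matrix[OF assms, of x w]
    by (simp add: inner_diff_left inner_diff_right matrix_vector_mult_diff_distrib
        matrix_vector_mult_scaleR algebra_simps power2_eq_square)
  also have "\<dots> = x \<bullet> (H *v x)"
    by (cases "W = 0") (simp_all add: field_simps power2_eq_square)
  finally show ?thesis .
qed

lemma matrix_scaled_H_reflection:
  "matrix (\<lambda>x. \<rho> *\<^sub>R H_reflection H w x) *v x = \<rho> *\<^sub>R H_reflection H w x"
proof -
  have "linear (\<lambda>x. \<rho> *\<^sub>R H_reflection H w x)"
    by (intro linearI) (simp_all add: linear_add[OF linear_H_reflection]
        linear_scale[OF linear_H_reflection] scaleR_add_right)
  then show ?thesis by (metis matrix_vector_mul(2))
qed

text \<open>For \<open>e = s\<close> the mirror vector is \<open>0\<close> and, as \<open>x / 0 = 0\<close>, the reflection is the identity.\<close>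
lemma H_reflection_swap:
  assumes Hs: "transpose H = H" and Hp: "pos_def H" and "e \<bullet> (H *v e) = s \<bullet> (H *v s)"
  shows "H_reflection H (e - s) e = s"
proof -
  define W where "W = (e - s) \<bullet> (H *v (e - s))"
  have "W = 2 * ((e - s) \<bullet> (H *v e))"
    unfolding W_def using assms(3) inner_symmetric_matrix[OF Hs, of s e]
    by (simp add: inner_diff_left inner_diff_right matrix_vector_mult_diff_distrib)
  moreover have "W = 0 \<Longrightarrow> e = s" using pos_def_eq_0[OF Hp] unfolding W_def by force
  ultimately show ?thesis unfolding H_reflection_def W_def[symmetric] by (cases "W = 0") auto
qed

lemma selfadjoint_contraction_mapping:
  fixes H :: "real^'m^'m" and e r :: "real^'m" and \<beta> :: real
  assumes Hs: "transpose H = H" and Hp: "pos_def H" and "0 \<le> \<beta>"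
    and rr: "r \<bullet> (H *v r) \<le> \<beta>^2 * (e \<bullet> (H *v e))"
  obtains N :: "real^'m^'m" where "N *v e = r" "selfadjoint_wrt H N"
    "\<And>x. (N *v x) \<bullet> (H *v (N *v x)) \<le> \<beta>^2 * (x \<bullet> (H *v x))"
proof -
  define ne where "ne = sqrt (e \<bullet> (H *v e))"
  define nr where "nr = sqrt (r \<bullet> (H *v r))"
  define \<rho> where "\<rho> = nr / ne"
  define R where "R = H_reflection H (e - (ne / nr) *\<^sub>R r)"
  define N where "N = matrix (\<lambda>x. \<rho> *\<^sub>R R x)"
  have Nv: "N *v x = \<rho> *\<^sub>R R x" for x
    unfolding N_def R_def by (rule matrix_scaled_H_reflection)
  have ne: "0 \<le> ne" "ne^2 = e \<bullet> (H *v e)" unfolding ne_def using pos_def_nonneg[OF Hp] by auto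
  have nr: "0 \<le> nr" "nr^2 = r \<bullet> (H *v r)" unfolding nr_def using pos_def_nonneg[OF Hp] by auto
  have "nr \<le> sqrt (\<beta>^2 * (e \<bullet> (H *v e)))" unfolding nr_def using rr by (rule real_sqrt_le_mono)
  also have "\<dots> = \<beta> * ne" unfolding ne_def using \<open>0 \<le> \<beta>\<close> by (simp add: real_sqrt_mult)
  finally have "nr \<le> \<beta> * ne" .
  have "0 \<le> \<rho>" unfolding \<rho>_def using ne nr by simp
  have "\<rho> \<le> \<beta>"
  proof (cases "ne = 0")
    case False
    then show ?thesis
      unfolding \<rho>_def using \<open>nr \<le> \<beta> * ne\<close> ne by (simp add: divide_le_eq mult.commute)
  qed (simp add: \<rho>_def \<open>0 \<le> \<beta>\<close>)
  have "N *v e = r"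
  proof (cases "nr = 0")
    case True
    then have "r = 0" using nr pos_def_eq_0[OF Hp] by simp
    then show ?thesis unfolding Nv \<rho>_def using True by simp
  next
    case False
    with \<open>nr \<le> \<beta> * ne\<close> ne nr have "ne \<noteq> 0" by auto
    have "((ne / nr) *\<^sub>R r) \<bullet> (H *v ((ne / nr) *\<^sub>R r)) = e \<bullet> (H *v e)"
      using False ne(2) nr(2)[symmetric] by (simp add: matrix_vector_mult_scaleR field_simps power2_eq_square)
    then have "R e = (ne / nr) *\<^sub>R r"
      unfolding R_def by (intro H_reflection_swap[OF Hs Hp]) simp
    then show ?thesis unfolding Nv \<rho>_def using False \<open>ne \<noteq> 0\<close> by simp
  qed
  moreover have "selfadjoint_wrt H N"
    unfolding selfadjoint_wrt_def Nv R_def using H_reflection_selfadjoint[OF Hs] by simp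
  moreover have "(N *v x) \<bullet> (H *v (N *v x)) \<le> \<beta>^2 * (x \<bullet> (H *v x))" for x
  proof -
    have "(N *v x) \<bullet> (H *v (N *v x)) = \<rho>^2 * (x \<bullet> (H *v x))"
      unfolding Nv R_def using H_reflection_isometry[OF Hs]
      by (simp add: matrix_vector_mult_scaleR power2_eq_square)
    also have "\<dots> \<le> \<beta>^2 * (x \<bullet> (H *v x))"
      using \<open>0 \<le> \<rho>\<close> \<open>\<rho> \<le> \<beta>\<close> pos_def_nonneg[OF Hp] by (intro mult_right_mono power_mono) auto
    finally show ?thesis .
  qed
  ultimately show ?thesis using that by blast
qed

lemma contraction_inner_bound:
  fixes H N :: "real^'m^'m"
  assumes Hs: "transpose H = H" and Hp: "pos_def H" and "0 \<le> \<beta>"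
    and bound: "\<And>x. (N *v x) \<bullet> (H *v (N *v x)) \<le> \<beta>^2 * (x \<bullet> (H *v x))"
  shows "(N *v x) \<bullet> (H *v x) \<le> \<beta> * (x \<bullet> (H *v x))"
proof -
  define n where "n = x \<bullet> (H *v x)"
  have "0 \<le> n" unfolding n_def by (rule pos_def_nonneg[OF Hp])
  have "((N *v x) \<bullet> (H *v x))^2 \<le> ((N *v x) \<bullet> (H *v (N *v x))) * n"
    unfolding n_def by (rule psd_Cauchy_Schwarz[OF Hs pos_def_nonneg[OF Hp]])
  also have "\<dots> \<le> (\<beta>^2 * n) * n"
    using bound[of x] \<open>0 \<le> n\<close> unfolding n_def by (rule mult_right_mono)
  also have "\<dots> = (\<beta> * n)^2" by (simp add: power2_eq_square)
  finally have "\<bar>(N *v x) \<bullet> (H *v x)\<bar>^2 \<le> (\<beta> * n)^2" by simp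
  then have "\<bar>(N *v x) \<bullet> (H *v x)\<bar> \<le> \<beta> * n"
    by (rule power2_le_imp_le) (simp add: \<open>0 \<le> \<beta>\<close> \<open>0 \<le> n\<close>)
  then show ?thesis unfolding n_def by simp
qed

lemma shifted_matrix_vector:
  fixes N :: "real^'m^'m"
  shows "(\<theta> *\<^sub>R (mat 1 - N)) *v x = \<theta> *\<^sub>R (x - N *v x)"
  by (simp add: matrix_vector_mult_diff_rdistrib scaleR_matrix_vector_assoc[symmetric])

lemma selfadjoint_wrt_shift:
  fixes H N :: "real^'m^'m"
  assumes Hs: "transpose H = H" and N: "selfadjoint_wrt H N"
  shows "selfadjoint_wrt H (\<theta> *\<^sub>R (mat 1 - N))"
  unfolding selfadjoint_wrt_def
proof (intro allI)
  fix x y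
  have expand: "((\<theta> *\<^sub>R (mat 1 - N)) *v u) \<bullet> (H *v v) = \<theta> * (u \<bullet> (H *v v) - (N *v u) \<bullet> (H *v v))"
    for u v unfolding shifted_matrix_vector by (simp add: inner_diff_left)
  then show "((\<theta> *\<^sub>R (mat 1 - N)) *v x) \<bullet> (H *v y) = ((\<theta> *\<^sub>R (mat 1 - N)) *v y) \<bullet> (H *v x)"
    using N inner_symmetric_matrix[OF Hs, of x y] unfolding selfadjoint_wrt_def expand by metis
qed

lemma symmetric_pos_def_mult_matrix_inv:
  fixes H M :: "real^'m^'m"
  assumes Hs: "transpose H = H" and Hp: "pos_def H" and M: "selfadjoint_wrt H M"
    and pos: "\<And>x. x \<noteq> 0 \<Longrightarrow> 0 < (M *v x) \<bullet> (H *v x)"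
  shows "transpose (M ** matrix_inv H) = M ** matrix_inv H" "pos_def (M ** matrix_inv H)"
proof -
  have Hinv: "invertible H" using pos_def_invertible[OF Hp] .
  have form: "x \<bullet> ((M ** matrix_inv H) *v y) = (M *v (matrix_inv H *v y)) \<bullet> (H *v (matrix_inv H *v x))"
    for x y by (simp add: matrix_vector_mul_inv_cancel[OF Hinv] matrix_vector_mul_assoc[symmetric] inner_commute)
  show "transpose (M ** matrix_inv H) = M ** matrix_inv H"
  proof (rule symmetric_if_inner_symmetric)
    show "x \<bullet> ((M ** matrix_inv H) *v y) = y \<bullet> ((M ** matrix_inv H) *v x)" for x y
      using M unfolding selfadjoint_wrt_def form by blast
  qed
  show "pos_def (M ** matrix_inv H)"
    unfolding pos_def_def form
  proof (intro allI impI pos)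
    fix x :: "real^'m" assume "x \<noteq> 0"
    then show "matrix_inv H *v x \<noteq> 0" using matrix_vector_mul_inv_cancel(1)[OF Hinv, of x] by auto
  qed
qed

lemma preconditioner_of_H_contraction:
  fixes H N :: "real^'m^'m"
  assumes Hs: "transpose H = H" and Hp: "pos_def H" and "0 \<le> \<beta>" "\<beta> < 1" "0 < \<theta>"
    and N: "selfadjoint_wrt H N"
    and bound: "\<And>x. (N *v x) \<bullet> (H *v (N *v x)) \<le> \<beta>^2 * (x \<bullet> (H *v x))"
  defines "G \<equiv> matrix_inv (\<theta> *\<^sub>R (mat 1 - N) ** matrix_inv H)"
  shows "transpose G = G" "pos_def G" "matrix_inv G ** H = \<theta> *\<^sub>R (mat 1 - N)"
proof -
  define M where "M = \<theta> *\<^sub>R (mat 1 - N)"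
  have "selfadjoint_wrt H M" unfolding M_def using selfadjoint_wrt_shift[OF Hs N] .
  moreover have "0 < (M *v x) \<bullet> (H *v x)" if "x \<noteq> 0" for x
  proof -
    have "0 < \<theta> * ((1 - \<beta>) * (x \<bullet> (H *v x)))"
      using \<open>\<beta> < 1\<close> \<open>0 < \<theta>\<close> Hp \<open>x \<noteq> 0\<close> unfolding pos_def_def by simp
    also have "\<dots> \<le> \<theta> * (x \<bullet> (H *v x) - (N *v x) \<bullet> (H *v x))"
      using contraction_inner_bound[OF Hs Hp \<open>0 \<le> \<beta>\<close> bound, of x] \<open>0 < \<theta>\<close>
      by (simp add: algebra_simps)
    also have "\<dots> = (M *v x) \<bullet> (H *v x)"
      unfolding M_def shifted_matrix_vector by (simp add: inner_diff_left)
    finally show ?thesis .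
  qed
  ultimately have sym: "transpose (M ** matrix_inv H) = M ** matrix_inv H"
    and pd: "pos_def (M ** matrix_inv H)"
    using symmetric_pos_def_mult_matrix_inv[OF Hs Hp] by blast+
  have inv: "invertible (M ** matrix_inv H)" using pos_def_invertible[OF pd] .
  show "transpose G = G" unfolding G_def M_def[symmetric] using symmetric_matrix_inv[OF inv sym] .
  show "pos_def G" unfolding G_def M_def[symmetric] using pos_def_matrix_inv[OF pd sym] .
  have "M ** matrix_inv H ** H = M"
    using matrix_inv_left[OF pos_def_invertible[OF Hp]] by (simp add: matrix_mul_assoc[symmetric])
  then show "matrix_inv G ** H = \<theta> *\<^sub>R (mat 1 - N)"
    unfolding G_def M_def[symmetric] matrix_inv_matrix_inv[OF inv] by (simp add: M_def)
qed

lemma complex_eigenvalue_shifted_contraction: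
  fixes H N :: "real^'m^'m"
  assumes Hs: "transpose H = H" and Hp: "pos_def H" and "0 \<le> \<beta>" "0 < \<theta>"
    and N: "selfadjoint_wrt H N"
    and bound: "\<And>x. (N *v x) \<bullet> (H *v (N *v x)) \<le> \<beta>^2 * (x \<bullet> (H *v x))"
    and "complex_eigenvalue (\<theta> *\<^sub>R (mat 1 - N)) mu"
  shows "\<exists>r. mu = complex_of_real r \<and> \<theta> * (1 - \<beta>) \<le> r \<and> r \<le> \<theta> * (1 + \<beta>)"
proof -
  obtain p u where mu: "mu = complex_of_real p" and "u \<noteq> 0"
    and "(\<theta> *\<^sub>R (mat 1 - N)) *v u = p *\<^sub>R u"
    using complex_eigenvalue_selfadjoint_real[OF Hs Hp selfadjoint_wrt_shift[OF Hs N] assms(7)] by metis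
  then have eig: "\<theta> *\<^sub>R (N *v u) = (\<theta> - p) *\<^sub>R u"
    unfolding shifted_matrix_vector by (simp add: algebra_simps)
  have "N *v u = (1 / \<theta>) *\<^sub>R (\<theta> *\<^sub>R (N *v u))" using \<open>0 < \<theta>\<close> by simp
  also have "\<dots> = (1 - p / \<theta>) *\<^sub>R u"
    unfolding eig using \<open>0 < \<theta>\<close> by (simp add: diff_divide_distrib)
  finally have "N *v u = (1 - p / \<theta>) *\<^sub>R u" .
  then have "(1 - p / \<theta>)^2 * (u \<bullet> (H *v u)) \<le> \<beta>^2 * (u \<bullet> (H *v u))"
    using bound[of u] by (simp add: matrix_vector_mult_scaleR power2_eq_square mult.assoc)
  moreover have "0 < u \<bullet> (H *v u)" using Hp \<open>u \<noteq> 0\<close> unfolding pos_def_def by blast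
  ultimately have "(1 - p / \<theta>)^2 \<le> \<beta>^2" by (simp add: mult_le_cancel_right_pos)
  then have "\<bar>1 - p / \<theta>\<bar> \<le> \<beta>"
    using abs_le_square_iff[of "1 - p / \<theta>" \<beta>] \<open>0 \<le> \<beta>\<close> by simp
  then have "\<theta> * (1 - \<beta>) \<le> p \<and> p \<le> \<theta> * (1 + \<beta>)"
    using \<open>0 < \<theta>\<close> by (simp add: abs_le_iff field_simps)
  then show ?thesis using mu by blast
qed

theorem lemma2p2:
  fixes A :: "real^'n^'n" and B :: "real^'m^'n" and D S :: "real^'m^'m"
    and \<theta> :: real and f x0 :: "real^'n" and g y0 :: "real^'m" and i :: nat
  assumes "CARD('m) \<le> CARD('n)"
    and "invertible A"
    and "pos_def (sym_part A)"
    and "transpose D = D" and "pos_semidef D"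
    and "invertible (transpose B ** matrix_inv A ** B + D)"
    and "transpose (Hmat A B D) = Hmat A B D" and "pos_def (Hmat A B D)"
    and "transpose S = S" and "pos_def S"
    and "\<theta> > 0"
  shows "let H = Hmat A B D;
             \<kappa>1 = spec_cond (matrix_inv S ** H);
             \<beta>1 = (\<kappa>1 - 1) / (\<kappa>1 + 1);
             gi = uzawa_res A B D S \<theta> f g x0 y0 i
         in \<exists>G :: real^'m^'m. transpose G = G \<and> pos_def G \<and>
              matrix_inv G *v gi = (\<theta> * tau H S gi) *\<^sub>R (matrix_inv S *v gi) \<and>
              (\<forall>mu. complex_eigenvalue (matrix_inv G ** H) mu \<longrightarrow>
                 (\<exists>r. mu = complex_of_real r \<and> \<theta> * (1 - \<beta>1) \<le> r \<and> r \<le> \<theta> * (1 + \<beta>1)))"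
proof -
  define H where "H = Hmat A B D"
  define gi where "gi = uzawa_res A B D S \<theta> f g x0 y0 i"
  define \<beta>1 where "\<beta>1 = (spec_cond (matrix_inv S ** H) - 1) / (spec_cond (matrix_inv S ** H) + 1)"
  define e where "e = matrix_inv H *v gi"
  define r where "r = matrix_inv H *v gi - tau H S gi *\<^sub>R (matrix_inv S *v gi)"
  have Hs: "transpose H = H" and Hp: "pos_def H" unfolding H_def using assms by auto
  have error: "0 \<le> \<beta>1" "\<beta>1 < 1" "r \<bullet> (H *v r) \<le> \<beta>1^2 * (e \<bullet> (H *v e))"
    using preconditioned_steepest_descent_error[OF Hs Hp assms(9,10)]
    unfolding \<beta>1_def e_def r_def by blast+
  obtain N where "N *v e = r" and N: "selfadjoint_wrt H N"
    and bound: "\<And>x. (N *v x) \<bullet> (H *v (N *v x)) \<le> \<beta>1^2 * (x \<bullet> (H *v x))"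
    using selfadjoint_contraction_mapping[OF Hs Hp error(1,3)] by blast
  define G where "G = matrix_inv (\<theta> *\<^sub>R (mat 1 - N) ** matrix_inv H)"
  note G = preconditioner_of_H_contraction[OF Hs Hp error(1,2) \<open>\<theta> > 0\<close> N bound, folded G_def]
  have "matrix_inv G *v gi = (matrix_inv G ** H) *v e"
    unfolding e_def matrix_vector_mul_assoc[symmetric]
    using matrix_vector_mul_inv_cancel(1)[OF pos_def_invertible[OF Hp]] by simp
  also have "\<dots> = (\<theta> * tau H S gi) *\<^sub>R (matrix_inv S *v gi)"
    unfolding G(3) shifted_matrix_vector \<open>N *v e = r\<close> unfolding r_def e_def by simp
  finally show ?thesis
    using G complex_eigenvalue_shifted_contraction[OF Hs Hp error(1) \<open>\<theta> > 0\<close> N bound]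
    unfolding Let_def H_def[symmetric] gi_def[symmetric] \<beta>1_def[symmetric] by metis
qed

end
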